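(* Let $n$ be a positive even integer and $m$ a positive integer. Then $$\sum_{k=1}^\infty\frac{F_n^{2k}5^k\binom{2k}{2m}}{L_n^{2k}(2k-1)(2k)(2k+1)}=\frac{L_n}{4F_n}\sum_{j=0}^{m-1}\frac{5^{m-j}}{2m-2j}\frac{F_n^{2m-2j}}{2^{2m-2j}}F_{n(2m-2j)}-\frac{L_n}{4F_n}\sum_{j=1}^{m}\frac{5^{m-j}}{2m-2j+1}\frac{F_n^{2m-2j+1}}{2^{2m-2j+1}}L_{n(2m-2j+1)}$$ $$-\frac{5^m}{m}\frac{F_n^{2m}}{2^{2m+2}}L_{2nm}+\frac1{L_n}\frac{5^{m+1}}{m}\frac{F_n^{2m+1}}{2^{2m+3}}F_{2nm}+\frac1{L_n}\frac{5^m}{2m-1}\frac{F_n^{2m}}{2^{2m+1}}L_{n(2m-1)}+\frac{nL_n}{2F_n\sqrt5}\ln\alpha,$$ and $$\sum_{k=1}^\infty\frac{F_n^{2k}5^k\binom{2k}{2m+1}}{L_n^{2k}(2k-1)(2k)(2k+1)}=\frac{L_n}{4F_n}\sum_{j=0}^{m}\frac{5^{m-j}}{2m-2j+1}\frac{F_n^{2m-2j+1}}{2^{2m-2j+1}}L_{n(2m-2j+1)}-\frac{L_n}{4F_n}\sum_{j=1}^{m}\frac{5^{m-j+1}}{2m-2j+2}\frac{F_n^{2m-2j+2}}{2^{2m-2j+2}}F_{n(2m-2j+2)}$$ $$-\frac{5^{m+1}}{2m+1}\frac{F_n^{2m+1}}{2^{2m+2}}F_{n(2m+1)}+\frac1{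L_n}\frac{5^{m+1}}{2m+1}\frac{F_n^{2m+2}}{2^{2m+3}}L_{n(2m+1)}+\frac1{L_n}\frac{5^{m+1}}{m}\frac{F_n^{2m+1}}{2^{2m+3}}F_{2mn}-\frac{nL_n}{2F_n\sqrt5}\ln\alpha.$$
   Context: $F_n=(\alpha^n-\beta^n)/(\alpha-\beta)$ and $L_n=\alpha^n+\beta^n$ are the Fibonacci and Lucas numbers, with $\alpha=(1+\sqrt5)/2$, $\beta=(1-\sqrt5)/2$. *)

theory Defs
  imports Complex_Main
begin

definition alpha :: real where "alpha = (1 + sqrt 5) / 2"
definition beta :: real where "beta = (1 - sqrt 5) / 2"

definition fibr :: "nat \<Rightarrow> real" where "fibr n = (alpha ^ n - beta ^ n) / (alpha - beta)"
definition lucas :: "nat \<Rightarrow> real" where "lucas n = alpha ^ n + beta ^ n"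

end

theory Submission
  imports Defs "HOL-Analysis.Complex_Transcendental"
begin

text \<open>
  With \<open>x = \<surd>5 F\<^sub>n / L\<^sub>n\<close> the \<open>k\<close>-th term is
  \<open>C(2k,r) x\<^sup>2\<^sup>k / ((2k-1) 2k (2k+1))\<close>, so the series is the even part of the power series
  \<open>\<Sum>\<^sub>N C(N+2,r) y\<^sup>N\<^sup>+\<^sup>2 / ((N+1)(N+2)(N+3))\<close> at \<open>y = x\<close>.
  Partial fractions reduce the latter to the negative binomial series \<open>\<Sum>\<^sub>N C(N,s) y\<^sup>N\<close>
  and to \<open>\<Sum>\<^sub>N C(N,s) y\<^sup>N / (N+1)\<close>, which is a logarithm plus a finite alternating sum
  of powers of \<open>y/(1-y)\<close>.  For even \<open>n\<close> we have \<open>\<alpha>\<^sup>n \<beta>\<^sup>n = 1\<close>, and at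
  \<open>y = x\<close> and \<open>y = -x\<close> the quotient \<open>y/(1-y)\<close> equals \<open>\<alpha>\<^sup>n D\<close> and \<open>-\<beta>\<^sup>n D\<close>
  with \<open>D = \<surd>5 F\<^sub>n / 2\<close>.  Hence the \<open>j\<close>-th powers combine into
  \<open>D\<^sup>j \<surd>5 F\<^sub>n\<^sub>j\<close> or \<open>D\<^sup>j L\<^sub>n\<^sub>j\<close> according to the parity of \<open>j\<close>,
  and the logarithm becomes \<open>ln (\<alpha>\<^sup>2\<^sup>n)\<close>.
\<close>
lemma binomial_series_sums:
  fixes y :: real
  assumes "\<bar>y\<bar> < 1"
  shows "(\<lambda>N. real (N choose r) * y^N) sums (y^r / (1 - y)^Suc r)"
  using assms
proof (induction r arbitrary: y)
  case 0
  then show ?case using geometric_sums[of y] by simp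
next
  case (Suc r)
  have "summable (\<lambda>k. norm (y^k))"
    using summable_geometric[of "\<bar>y\<bar>"] Suc.prems by (simp add: power_abs)
  moreover have "summable (\<lambda>k. norm (real (k choose r) * y^k))"
    using sums_summable[OF Suc.IH[of "\<bar>y\<bar>"]] Suc.prems by (simp add: abs_mult power_abs)
  ultimately have "(\<lambda>k. \<Sum>i\<le>k. y^i * (real ((k-i) choose r) * y^(k-i)))
      sums ((\<Sum>k. y^k) * (\<Sum>k. real (k choose r) * y^k))"
    by (rule Cauchy_product_sums)
  moreover have "(\<Sum>i\<le>k. y^i * (real ((k-i) choose r) * y^(k-i))) = real (Suc k choose Suc r) * y^k" for k
  proof -
    have "(\<Sum>i\<le>k. y^i * (real ((k-i) choose r) * y^(k-i))) = (\<Sum>i\<le>k. y^k * real ((k-i) choose r))"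
      by (rule sum.cong) (auto simp: power_add[symmetric])
    also have "\<dots> = y^k * (\<Sum>i\<le>k. real ((k-i) choose r))"
      by (simp add: sum_distrib_left)
    also have "(\<Sum>i\<le>k. real ((k-i) choose r)) = (\<Sum>i\<le>k. real (i choose r))"
      using sum.atLeastAtMost_rev[of "\<lambda>i. real (i choose r)" 0 k] by (simp add: atMost_atLeast0)
    also have "\<dots> = real (Suc k choose Suc r)"
      by (simp only: of_nat_sum[symmetric] sum_choose_upper)
    finally show ?thesis by simp
  qed
  moreover have "(\<Sum>k. y^k) = 1 / (1 - y)"
    using suminf_geometric[of y] Suc.prems by simp
  moreover have "(\<Sum>k. real (k choose r) * y^k) = y^r / (1 - y)^Suc r"
    using Suc.IH[OF Suc.prems] by (rule sums_unique[symmetric])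
  ultimately have "(\<lambda>k. y * (real (Suc k choose Suc r) * y^k)) sums (y * (1 / (1 - y) * (y^r / (1 - y)^Suc r)))"
    by (intro sums_mult) simp
  then have "(\<lambda>k. real (Suc k choose Suc r) * y^Suc k) sums (y^Suc r / (1 - y)^Suc (Suc r))"
    by (simp add: field_simps)
  then show ?case
    using sums_Suc_iff[of "\<lambda>N. real (N choose Suc r) * y^N"] by (simp del: binomial_Suc_Suc)
qed

lemma ln_series_div_Suc_sums:
  fixes y :: real
  assumes "\<bar>y\<bar> < 1" "y \<noteq> 0"
  shows "(\<lambda>N. y^N / real (Suc N)) sums (- ln (1 - y) / y)"
proof -
  have "(\<lambda>N. - (y^N) / real N) sums ln (1 - y)"
    using ln_series'[of "-y"] assms by simp
  then have "(\<lambda>N. - (y^Suc N) / real (Suc N)) sums ln (1 - y)"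
    using sums_Suc_iff[of "\<lambda>N. - (y^N) / real N"] by simp
  then have "(\<lambda>N. (-1/y) * (- (y^Suc N) / real (Suc N))) sums ((-1/y) * ln (1 - y))"
    by (rule sums_mult)
  then show ?thesis using assms by (simp add: field_simps)
qed

lemma real_binomial_Suc_div_Suc:
  "real (Suc n choose Suc k) / real (Suc n) = real (n choose k) / real (Suc k)"
proof -
  have "real (Suc k) * real (Suc n choose Suc k) = real (Suc n) * real (n choose k)"
    using Suc_times_binomial[of k n] by (metis of_nat_mult)
  then show ?thesis by (simp add: field_simps del: of_nat_Suc)
qed

lemma real_binomial_div_Suc:
  "real (N choose Suc r) / real (Suc N) = real (N choose r) / real (Suc r) - real (N choose r) / real (Suc N)"
  using real_binomial_Suc_div_Suc[of N r] by (simp add: add_divide_distrib del: of_nat_Suc)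

lemma binomial_series_div_Suc_sums:
  fixes y :: real
  assumes "\<bar>y\<bar> < 1" "y \<noteq> 0"
  shows "(\<lambda>N. real (N choose r) * y^N / real (Suc N)) sums
    (((-1)^Suc r * ln (1 - y) + (\<Sum>j=1..r. (-1)^(r-j) * (y / (1 - y))^j / real j)) / y)"
proof (induction r)
  case 0
  then show ?case using ln_series_div_Suc_sums[OF assms] by simp
next
  case (Suc r)
  let ?u = "y / (1 - y)"
  let ?S = "\<lambda>r. \<Sum>j=1..r. (-1)^(r-j) * ?u^j / real j"
  have "(\<lambda>N. real (N choose r) * y^N / real (Suc r) - real (N choose r) * y^N / real (Suc N)) sums
      (y^r / (1 - y)^Suc r / real (Suc r) - ((-1)^Suc r * ln (1 - y) + ?S r) / y)"
    by (intro sums_diff sums_divide binomial_series_sums Suc.IH) (use assms in simp)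
  moreover have "real (N choose Suc r) * y^N / real (Suc N)
      = real (N choose r) * y^N / real (Suc r) - real (N choose r) * y^N / real (Suc N)" for N
  proof -
    have "real (N choose Suc r) * y^N / real (Suc N) = real (N choose Suc r) / real (Suc N) * y^N"
      by simp
    then show ?thesis
      unfolding real_binomial_div_Suc by (simp add: left_diff_distrib)
  qed
  moreover have "y^r / (1 - y)^Suc r / real (Suc r) - ((-1)^Suc r * ln (1 - y) + ?S r) / y
      = ((-1)^Suc (Suc r) * ln (1 - y) + ?S (Suc r)) / y"
  proof -
    have "y^r / (1 - y)^Suc r = ?u^Suc r / y"
      using assms by (simp add: field_simps)
    moreover have "?S (Suc r) = - ?S r + ?u^Suc r / real (Suc r)"
      by (simp add: sum_negf[symmetric] Suc_diff_le del: of_nat_Suc)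
    moreover have "a / y / c - (b + s) / y = (- b + (- s + a / c)) / y" for a b c s :: real
      by (simp add: divide_divide_eq_left' add_divide_distrib diff_divide_distrib)
    ultimately show ?thesis by (simp only:) simp
  qed
  ultimately show ?case by simp
qed

lemma partial_fractions_cubic:
  fixes X :: real
  shows "X / (real (N+1) * real (N+2) * real (N+3))
    = X / real (N+1) / 2 - X / real (N+2) + X / real (N+3) / 2"
proof -
  define a b c where "a = real (N+1)" and "b = real (N+2)" and "c = real (N+3)"
  have "a \<noteq> 0" "b \<noteq> 0" "c \<noteq> 0" by (simp_all add: a_def b_def c_def)
  then have "X / a / 2 - X / b + X / c / 2 = X * (b*c - 2*a*c + a*b) / (2*a*b*c)"
    by (simp add: field_simps)
  also have "b*c - 2*a*c + a*b = 2"
    by (simp add: a_def b_def c_def algebra_simps)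
  finally have "X / a / 2 - X / b + X / c / 2 = X / (a*b*c)"
    by simp
  then show ?thesis
    by (simp only: a_def b_def c_def)
qed

lemma binomial_series_div_cubic_sums:
  fixes y :: real
  assumes "\<bar>y\<bar> < 1" "y \<noteq> 0" "2 \<le> r"
  defines "u \<equiv> y / (1 - y)"
  shows "(\<lambda>N. real ((N+2) choose r) * y^(N+2) / (real (N+1) * real (N+2) * real (N+3))) sums
    (y * (u^(r-1) / (real r - 1) + u^r / real r) / 2 - u^r / real r
     + ((-1)^Suc r * ln (1 - y) + (\<Sum>j=1..r. (-1)^(r-j) * u^j / real j)) / y / 2)"
proof -
  obtain s where r: "r = Suc (Suc s)"
    using assms(3) by (metis add_2_eq_Suc le_Suc_ex)
  have y1: "1 - y \<noteq> 0" using assms(1) by auto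
  have "real ((N+2) choose r) * y^(N+2) / real (N+1)
      = y^2 * (real (N choose s) * y^N / real (Suc s) + real (N choose Suc s) * y^N / real r)" for N
  proof -
    have "real ((N+2) choose r) / real (N+1)
        = real (N choose s) / real (Suc s) + real (N choose Suc s) / real r"
      using real_binomial_Suc_div_Suc[of N s] real_binomial_Suc_div_Suc[of N "Suc s"]
      by (simp add: r add_divide_distrib del: of_nat_Suc)
    moreover have "real ((N+2) choose r) * y^(N+2) / real (N+1)
        = real ((N+2) choose r) / real (N+1) * (y^2 * y^N)"
      by (simp add: power_add power2_eq_square)
    ultimately show ?thesis by (simp add: algebra_simps)
  qed
  moreover have "(\<lambda>N. y^2 * (real (N choose s) * y^N / real (Suc s) + real (N choose Suc s) * y^N / real r))
      sums (y^2 * (y^s / (1 - y)^Suc s / real (Suc s) + y^Suc s / (1 - y)^r / real r))"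
    unfolding r by (intro sums_mult sums_add sums_divide binomial_series_sums assms(1))
  moreover have "y^2 * (y^s / (1 - y)^Suc s / real (Suc s) + y^Suc s / (1 - y)^r / real r)
      = y * (u^Suc s / real (Suc s) + u^r / real r)"
    using y1 by (simp add: u_def r power2_eq_square field_simps)
  ultimately have by_N1: "(\<lambda>N. real ((N+2) choose r) * y^(N+2) / real (N+1))
      sums (y * (u^(r-1) / (real r - 1) + u^r / real r))"
    by (simp add: r)
  have by_N2_term: "real ((N+2) choose r) * y^(N+2) / real (N+2)
      = y * (real (Suc N choose Suc s) * y^Suc N) / real r" for N
  proof -
    have "real ((N+2) choose r) / real (N+2) = real (Suc N choose Suc s) / real r"
      using real_binomial_Suc_div_Suc[of "Suc N" "Suc s"] by (simp add: r)
    then show ?thesis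
      by (simp add: field_simps del: of_nat_Suc binomial_Suc_Suc)
  qed
  have "(\<lambda>N. real (Suc N choose Suc s) * y^Suc N) sums (y^Suc s / (1 - y)^r)"
    using binomial_series_sums[OF assms(1), of "Suc s"] sums_Suc_iff[of "\<lambda>N. real (N choose Suc s) * y^N"]
    by (simp add: r del: binomial_Suc_Suc)
  from sums_divide[OF sums_mult[OF this, of y], of "real r"]
  have by_N2: "(\<lambda>N. real ((N+2) choose r) * y^(N+2) / real (N+2)) sums (u^r / real r)"
    unfolding by_N2_term using y1 by (simp add: u_def r field_simps)
  have by_N3: "(\<lambda>N. real ((N+2) choose r) * y^(N+2) / real (N+3)) sums
      (((-1)^Suc r * ln (1 - y) + (\<Sum>j=1..r. (-1)^(r-j) * u^j / real j)) / y)"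
    using binomial_series_div_Suc_sums[OF assms(1,2), of r]
      sums_iff_shift[of "\<lambda>N. real (N choose r) * y^N / real (Suc N)" 2]
    by (simp add: u_def r numeral_2_eq_2 numeral_3_eq_3 add.commute)
  show ?thesis
    unfolding partial_fractions_cubic
    by (rule sums_add[OF sums_diff[OF sums_divide[OF by_N1, of 2] by_N2] sums_divide[OF by_N3, of 2]])
qed

lemma sums_even_part:
  fixes f :: "nat \<Rightarrow> 'a::real_normed_field"
  assumes "f sums a" "(\<lambda>N. (-1)^N * f N) sums b"
  shows "(\<lambda>i. f (2*i)) sums ((a + b) / 2)"
proof -
  have "(\<lambda>N. (f N + (-1)^N * f N) / 2) sums ((a + b) / 2)"
    by (intro sums_divide sums_add assms)
  then have "(\<lambda>i. \<Sum>N\<in>{i*2..<i*2+2}. (f N + (-1)^N * f N) / 2) sums ((a + b) / 2)"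
    by (rule sums_group) simp
  moreover have "(\<Sum>N\<in>{i*2..<i*2+2}. (f N + (-1)^N * f N) / 2) = f (2*i)" for i
  proof -
    have "{i*2..<i*2+2} = {2*i, Suc (2*i)}" by auto
    then show ?thesis by simp
  qed
  ultimately show ?thesis by simp
qed

lemma even_binomial_cubic_series_sums:
  fixes y :: real
  assumes "\<bar>y\<bar> < 1" "y \<noteq> 0" "2 \<le> r"
  defines "u \<equiv> y / (1 - y)" and "w \<equiv> - y / (1 + y)"
  shows "(\<lambda>i. real ((2*i+2) choose r) * y^(2*i+2) / (real (2*i+1) * real (2*i+2) * real (2*i+3))) sums
    (y * ((u^(r-1) - w^(r-1)) / (real r - 1) + (u^r - w^r) / real r) / 4 - (u^r + w^r) / (2 * real r)
     + ((-1)^r * (ln (1 + y) - ln (1 - y)) + (\<Sum>j=1..r. (-1)^(r-j) * ((u^j - w^j) / real j))) / y / 4)"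
proof -
  define f where "f z N = real ((N+2) choose r) * z^(N+2) / (real (N+1) * real (N+2) * real (N+3))"
    for z :: real and N
  define S where "S v = (\<Sum>j=1..r. (-1)^(r-j) * v^j / real j)" for v :: real
  define G where "G z v l = z * (v^(r-1) / (real r - 1) + v^r / real r) / 2 - v^r / real r
      + ((-1)^Suc r * l + S v) / z / 2" for z v l :: real
  have "f y sums G y u (ln (1 - y))"
    unfolding f_def G_def S_def u_def by (rule binomial_series_div_cubic_sums[OF assms(1-3)])
  moreover have "(\<lambda>N. (-1)^N * f y N) sums G (-y) w (ln (1 + y))"
  proof -
    have "(\<lambda>N. (-1)^N * f y N) = f (-y)"
      unfolding f_def by (rule ext) (simp add: power_minus[of y])
    then show ?thesis
      using binomial_series_div_cubic_sums[of "-y" r] assms(1-3)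
      unfolding f_def G_def S_def w_def by simp
  qed
  ultimately have "(\<lambda>i. f y (2*i)) sums ((G y u (ln (1 - y)) + G (-y) w (ln (1 + y))) / 2)"
    by (rule sums_even_part)
  also have "(G y u (ln (1 - y)) + G (-y) w (ln (1 + y))) / 2
    = y * ((u^(r-1) - w^(r-1)) / (real r - 1) + (u^r - w^r) / real r) / 4 - (u^r + w^r) / (2 * real r)
      + ((-1)^r * (ln (1 + y) - ln (1 - y)) + (S u - S w)) / y / 4"
  proof -
    have average: "((y * (a / k1 + b / k) / 2 - b / k + (c * l1 + s) / y / 2)
        + (-y * (a' / k1 + b' / k) / 2 - b' / k + (c * l2 + s') / (-y) / 2)) / 2
      = y * ((a - a') / k1 + (b - b') / k) / 4 - (b + b') / (2 * k) + (- c * (l2 - l1) + (s - s')) / y / 4"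
      if "k \<noteq> 0" "k1 \<noteq> 0" for a a' b b' k k1 c l1 l2 s s' :: real
      using that assms(2) by (simp add: field_simps)
    have "real r \<noteq> 0" "real r - 1 \<noteq> 0" using assms(3) by auto
    from average[OF this, where c = "- ((-1)^r)"] show ?thesis
      unfolding G_def by (simp only: power_Suc mult_minus1 minus_minus)
  qed
  also have "S u - S w = (\<Sum>j=1..r. (-1)^(r-j) * ((u^j - w^j) / real j))"
    unfolding S_def by (simp add: sum_subtractf[symmetric] right_diff_distrib diff_divide_distrib)
  finally show ?thesis
    unfolding f_def .
qed

lemma sum_alternating_even:
  fixes g :: "nat \<Rightarrow> 'a::comm_ring_1"
  shows "(\<Sum>j=1..2*m. (-1)^(2*m-j) * g j) = (\<Sum>i=1..m. g (2*i)) - (\<Sum>i<m. g (2*i+1))"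
proof (induction m)
  case 0
  then show ?case by simp
next
  case (Suc m)
  have "{1..2 * Suc m} = insert (Suc (Suc (2*m))) (insert (Suc (2*m)) {1..2*m})" by auto
  moreover have "(\<Sum>j=1..2*m. (-1)^(2 * Suc m - j) * g j) = (\<Sum>j=1..2*m. (-1)^(2*m-j) * g j)"
    by (rule sum.cong) (auto simp: Suc_diff_le)
  ultimately show ?case
    using Suc.IH by (simp add: Suc_diff_le)
qed

lemma sum_alternating_odd:
  fixes g :: "nat \<Rightarrow> 'a::comm_ring_1"
  shows "(\<Sum>j=1..2*m+1. (-1)^(2*m+1-j) * g j) = (\<Sum>i\<le>m. g (2*i+1)) - (\<Sum>i=1..m. g (2*i))"
proof -
  have "(\<Sum>j=1..2*m+1. (-1)^(2*m+1-j) * g j) = - (\<Sum>j=1..2*m. (-1)^(2*m-j) * g j) + g (2*m+1)"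
    by (simp add: sum_negf[symmetric] Suc_diff_le)
  then show ?thesis
    unfolding sum_alternating_even by (simp add: lessThan_Suc_atMost[symmetric])
qed

lemma sum_reflect:
  fixes f :: "nat \<Rightarrow> 'a::comm_monoid_add"
  assumes "a \<le> b" "b \<le> m"
  shows "(\<Sum>j=a..b. f (m - j)) = (\<Sum>i=m-b..m-a. f i)"
  by (rule sum.reindex_bij_witness[where i="\<lambda>i. m - i" and j="\<lambda>j. m - j"]) (use assms in auto)

lemma reciprocal_pair_quotient:
  fixes a b :: real
  assumes "0 < b" "b < a" "a * b = 1"
  defines "x \<equiv> (a - b) / (a + b)"
  shows "0 < x" "x < 1" "x / (1 - x) = a * ((a - b) / 2)" "- x / (1 + x) = - (b * ((a - b) / 2))"
    "ln (1 + x) - ln (1 - x) = 2 * ln a"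
proof -
  have ab: "a + b \<noteq> 0" "a \<noteq> 0" "b \<noteq> 0" using assms(1,2) by simp_all
  have one_minus: "1 - x = 2 * b / (a + b)" and one_plus: "1 + x = 2 * a / (a + b)"
    unfolding x_def using ab by (simp_all add: field_simps)
  show "0 < x" "x < 1" using assms(1,2) unfolding x_def by simp_all
  have inv_b: "1 / b = a" and inv_a: "1 / a = b" using assms by (simp_all add: field_simps)
  have "x / (1 - x) = x / (2 * b / (a + b))"
    by (simp only: one_minus)
  also have "\<dots> = (a - b) / 2 * (1 / b)"
    unfolding x_def using ab by simp
  finally show "x / (1 - x) = a * ((a - b) / 2)"
    by (simp only: inv_b mult.commute)
  have "- x / (1 + x) = - x / (2 * a / (a + b))"
    by (simp only: one_plus)
  also have "\<dots> = - ((a - b) / 2 * (1 / a))"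
    unfolding x_def using ab by (simp add: minus_divide_left minus_diff_eq)
  finally show "- x / (1 + x) = - (b * ((a - b) / 2))"
    by (simp only: inv_a mult.commute)
  have "(1 + x) / (1 - x) = (2 * a / (a + b)) / (2 * b / (a + b))"
    by (simp only: one_plus one_minus)
  also have "\<dots> = a * (1 / b)"
    using ab by simp
  finally have ratio: "(1 + x) / (1 - x) = a * a"
    by (simp only: inv_b)
  have "0 < 1 - x" "0 < 1 + x" using \<open>0 < x\<close> \<open>x < 1\<close> by simp_all
  then have "ln (1 + x) - ln (1 - x) = ln ((1 + x) / (1 - x))"
    by (simp add: ln_div)
  also have "\<dots> = 2 * ln a"
    unfolding ratio using assms(1,2) by (simp add: ln_mult)
  finally show "ln (1 + x) - ln (1 - x) = 2 * ln a" .
qed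

lemma alpha_gt_one: "alpha > 1"
proof -
  have "sqrt 5 > 1" by simp
  then show ?thesis unfolding alpha_def by simp
qed

lemma alpha_times_beta: "alpha * beta = -1"
  unfolding alpha_def beta_def by (simp add: field_simps power2_eq_square[symmetric])

lemma alpha_minus_beta: "alpha - beta = sqrt 5"
  unfolding alpha_def beta_def by (simp add: field_simps)

lemma lucas_mult: "lucas (n * k) = (alpha^n)^k + (beta^n)^k"
  unfolding lucas_def by (simp add: power_mult)

lemma sqrt5_fibr_mult: "sqrt 5 * fibr (n * k) = (alpha^n)^k - (beta^n)^k"
  unfolding fibr_def alpha_minus_beta by (simp add: power_mult)

lemma alpha_beta_power_even: "even n \<Longrightarrow> alpha^n * beta^n = 1"
  by (metis alpha_times_beta power_mult_distrib neg_one_even_power)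

lemma scaled_binet_powers:
  fixes D :: real
  shows "(alpha^n * D)^(2*i) - (-(beta^n * D))^(2*i) = D^(2*i) * (sqrt 5 * fibr (n*(2*i)))"
    and "(alpha^n * D)^(2*i) + (-(beta^n * D))^(2*i) = D^(2*i) * lucas (n*(2*i))"
    and "(alpha^n * D)^(2*i+1) - (-(beta^n * D))^(2*i+1) = D^(2*i+1) * lucas (n*(2*i+1))"
    and "(alpha^n * D)^(2*i+1) + (-(beta^n * D))^(2*i+1) = D^(2*i+1) * (sqrt 5 * fibr (n*(2*i+1)))"
  unfolding sqrt5_fibr_mult lucas_mult by (simp_all add: power_mult_distrib algebra_simps)

lemma half_sqrt5_power:
  fixes z :: real
  shows "(sqrt 5 * z / 2)^(2*i) = 5^i * z^(2*i) / 2^(2*i)"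
  by (simp add: power_mult_distrib power_divide power_mult)

text \<open>The summands of the four finite sums of the theorem, indexed by the exponent
  \<open>i = m - j\<close> (resp. \<open>i = m - j + 1\<close>) instead of by \<open>j\<close>.\<close>

definition fib_power_term :: "nat \<Rightarrow> nat \<Rightarrow> real" where
  "fib_power_term n i = 5^i / (2 * real i) * fibr n^(2*i) / 2^(2*i) * fibr (n*(2*i))"

definition lucas_power_term :: "nat \<Rightarrow> nat \<Rightarrow> real" where
  "lucas_power_term n i = 5^i / (2 * real i + 1) * fibr n^(2*i+1) / 2^(2*i+1) * lucas (n*(2*i+1))"

lemma scaled_binet_power_terms:
  fixes n i :: nat
  defines "D \<equiv> sqrt 5 * fibr n / 2"
  shows "((alpha^n * D)^(2*i) - (-(beta^n * D))^(2*i)) / real (2*i) = sqrt 5 * fib_power_term n i"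
    and "((alpha^n * D)^(2*i+1) - (-(beta^n * D))^(2*i+1)) / real (2*i+1) = sqrt 5 * lucas_power_term n i"
proof -
  have D_even: "D^(2*i) = 5^i * fibr n^(2*i) / 2^(2*i)"
    unfolding D_def by (rule half_sqrt5_power)
  show "((alpha^n * D)^(2*i) - (-(beta^n * D))^(2*i)) / real (2*i) = sqrt 5 * fib_power_term n i"
    unfolding scaled_binet_powers D_even fib_power_term_def by (simp add: mult_ac)
  have "D^(2*i+1) = sqrt 5 * (5^i * fibr n^(2*i+1) / 2^(2*i+1))"
    unfolding power_add D_even by (simp add: D_def)
  then show "((alpha^n * D)^(2*i+1) - (-(beta^n * D))^(2*i+1)) / real (2*i+1) = sqrt 5 * lucas_power_term n i"
    unfolding scaled_binet_powers lucas_power_term_def by (simp add: mult_ac)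
qed

lemma fib_power_term_reflect:
  assumes "j \<le> m"
  shows "5^(m-j) / (2 * real m - 2 * real j) * fibr n^(2*m-2*j) / 2^(2*m-2*j) * fibr (n*(2*m-2*j))
    = fib_power_term n (m - j)"
  using assms by (simp add: fib_power_term_def of_nat_diff diff_mult_distrib2)

lemma lucas_power_term_reflect:
  assumes "j \<le> m"
  shows "5^(m-j) / (2 * real m - 2 * real j + 1) * fibr n^(2*m-2*j+1) / 2^(2*m-2*j+1) * lucas (n*(2*m-2*j+1))
    = lucas_power_term n (m - j)"
  using assms by (simp add: lucas_power_term_def of_nat_diff diff_mult_distrib2)

lemma sum_fib_power_term_desc:
  assumes "0 < m"
  shows "(\<Sum>j=0..m-1. 5^(m-j) / (2 * real m - 2 * real j) * fibr n^(2*m-2*j) / 2^(2*m-2*j)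
      * fibr (n*(2*m-2*j))) = (\<Sum>i=1..m. fib_power_term n i)"
proof -
  have "(\<Sum>j=0..m-1. 5^(m-j) / (2 * real m - 2 * real j) * fibr n^(2*m-2*j) / 2^(2*m-2*j)
      * fibr (n*(2*m-2*j))) = (\<Sum>j=0..m-1. fib_power_term n (m - j))"
    by (intro sum.cong refl fib_power_term_reflect) (use assms in auto)
  also have "\<dots> = (\<Sum>i=1..m. fib_power_term n i)"
    using sum_reflect[of 0 "m-1" m] assms by simp
  finally show ?thesis .
qed

lemma sum_fib_power_term_desc_shift:
  "(\<Sum>j=1..m. 5^(m-j+1) / (2 * real m - 2 * real j + 2) * fibr n^(2*m-2*j+2) / 2^(2*m-2*j+2)
      * fibr (n*(2*m-2*j+2))) = (\<Sum>i=1..m. fib_power_term n i)"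
proof -
  have "(\<Sum>j=1..m. 5^(m-j+1) / (2 * real m - 2 * real j + 2) * fibr n^(2*m-2*j+2) / 2^(2*m-2*j+2)
      * fibr (n*(2*m-2*j+2))) = (\<Sum>j=1..m. fib_power_term n (Suc m - j))"
  proof (rule sum.cong[OF refl])
    fix j assume "j \<in> {1..m}"
    then have "m - j + 1 = Suc m - j" "2*m - 2*j + 2 = 2 * Suc m - 2*j"
      "2 * real m - 2 * real j + 2 = 2 * real (Suc m) - 2 * real j" by auto
    then show "5^(m-j+1) / (2 * real m - 2 * real j + 2) * fibr n^(2*m-2*j+2) / 2^(2*m-2*j+2)
      * fibr (n*(2*m-2*j+2)) = fib_power_term n (Suc m - j)"
      using \<open>j \<in> {1..m}\<close> by (simp only:) (rule fib_power_term_reflect, simp)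
  qed
  also have "\<dots> = (\<Sum>i=1..m. fib_power_term n i)"
    using sum_reflect[of 1 m "Suc m"] by (cases m) simp_all
  finally show ?thesis .
qed

lemma sum_lucas_power_term_desc:
  "(\<Sum>j=1..m. 5^(m-j) / (2 * real m - 2 * real j + 1) * fibr n^(2*m-2*j+1) / 2^(2*m-2*j+1)
      * lucas (n*(2*m-2*j+1))) = (\<Sum>i<m. lucas_power_term n i)"
    and sum_lucas_power_term_desc_atMost:
  "(\<Sum>j=0..m. 5^(m-j) / (2 * real m - 2 * real j + 1) * fibr n^(2*m-2*j+1) / 2^(2*m-2*j+1)
      * lucas (n*(2*m-2*j+1))) = (\<Sum>i\<le>m. lucas_power_term n i)"
proof -
  have "(\<Sum>j=1..m. 5^(m-j) / (2 * real m - 2 * real j + 1) * fibr n^(2*m-2*j+1) / 2^(2*m-2*j+1)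
      * lucas (n*(2*m-2*j+1))) = (\<Sum>j=1..m. lucas_power_term n (m - j))"
    by (intro sum.cong refl lucas_power_term_reflect) auto
  also have "\<dots> = (\<Sum>i<m. lucas_power_term n i)"
    using sum_reflect[of 1 m m] by (cases m) (simp_all add: atLeast0AtMost lessThan_Suc_atMost)
  finally show "(\<Sum>j=1..m. 5^(m-j) / (2 * real m - 2 * real j + 1) * fibr n^(2*m-2*j+1) / 2^(2*m-2*j+1)
      * lucas (n*(2*m-2*j+1))) = (\<Sum>i<m. lucas_power_term n i)" .
  have "(\<Sum>j=0..m. 5^(m-j) / (2 * real m - 2 * real j + 1) * fibr n^(2*m-2*j+1) / 2^(2*m-2*j+1)
      * lucas (n*(2*m-2*j+1))) = (\<Sum>j=0..m. lucas_power_term n (m - j))"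
    by (intro sum.cong refl lucas_power_term_reflect) auto
  also have "\<dots> = (\<Sum>i\<le>m. lucas_power_term n i)"
    using sum_reflect[of 0 m m] by (simp add: atLeast0AtMost)
  finally show "(\<Sum>j=0..m. 5^(m-j) / (2 * real m - 2 * real j + 1) * fibr n^(2*m-2*j+1) / 2^(2*m-2*j+1)
      * lucas (n*(2*m-2*j+1))) = (\<Sum>i\<le>m. lucas_power_term n i)" .
qed

lemma binet_even_index:
  assumes "0 < n" "even n"
  shows "0 < beta^n" "beta^n < alpha^n" "alpha^n * beta^n = 1"
proof -
  show ab: "alpha^n * beta^n = 1"
    using assms(2) by (rule alpha_beta_power_even)
  have "beta \<noteq> 0" using alpha_times_beta by auto
  then show "0 < beta^n"
    using assms(2) by (simp add: zero_less_power_eq)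
  have "b < a" if "1 < a" "a * b = 1" for a b :: real
  proof -
    have "b = 1 / a" using that by (simp add: eq_divide_eq mult.commute)
    then show ?thesis using that less_1_mult[of a a] by (simp add: divide_less_eq)
  qed
  moreover have "1 < alpha^n" using alpha_gt_one assms(1) by (simp add: one_less_power)
  ultimately show "beta^n < alpha^n" using ab by blast
qed

lemma fib_lucas_series_sums:
  fixes n r :: nat
  assumes "0 < n" "even n" "2 \<le> r"
  defines "x \<equiv> sqrt 5 * fibr n / lucas n" and "D \<equiv> sqrt 5 * fibr n / 2"
  defines "u \<equiv> alpha^n * D" and "w \<equiv> - (beta^n * D)"
  shows "(\<lambda>i. let k = Suc i in fibr n ^ (2*k) * 5 ^ k * real ((2*k) choose r)
        / (lucas n ^ (2*k) * (2 * real k - 1) * (2 * real k) * (2 * real k + 1))) sums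
    (x * ((u^(r-1) - w^(r-1)) / (real r - 1) + (u^r - w^r) / real r) / 4 - (u^r + w^r) / (2 * real r)
     + ((-1)^r * (2 * real n * ln alpha) + (\<Sum>j=1..r. (-1)^(r-j) * ((u^j - w^j) / real j))) / x / 4)"
proof -
  note ab = binet_even_index[OF assms(1,2)]
  have "x = (alpha^n - beta^n) / (alpha^n + beta^n)" and "D = (alpha^n - beta^n) / 2"
    using sqrt5_fibr_mult[of n 1] lucas_mult[of n 1] by (simp_all add: x_def D_def)
  note point = reciprocal_pair_quotient[OF ab, folded this]
  have "ln (alpha^n) = real n * ln alpha"
    using alpha_gt_one by (simp add: ln_realpow)
  then have "(-1)^r * (ln (1 + x) - ln (1 - x)) = (-1)^r * (2 * real n * ln alpha)"
    unfolding point(5) by simp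
  moreover have "\<bar>x\<bar> < 1" "x \<noteq> 0" using point(1,2) by auto
  moreover have "(let k = Suc i in fibr n ^ (2*k) * 5 ^ k * real ((2*k) choose r)
        / (lucas n ^ (2*k) * (2 * real k - 1) * (2 * real k) * (2 * real k + 1)))
      = real ((2*i+2) choose r) * x^(2*i+2) / (real (2*i+1) * real (2*i+2) * real (2*i+3))" for i
  proof -
    have "x^(2*i+2) = 5^Suc i * fibr n^(2 * Suc i) / lucas n^(2 * Suc i)"
      unfolding x_def by (simp add: power_mult_distrib power_divide power_mult power_add)
    moreover have "real (2*i+1) * real (2*i+2) * real (2*i+3)
        = (2 * real (Suc i) - 1) * (2 * real (Suc i)) * (2 * real (Suc i) + 1)"
      by (simp add: algebra_simps)
    moreover have "2*i+2 = 2 * Suc i" by simp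
    ultimately show ?thesis
      unfolding Let_def by (simp only:) (simp add: mult_ac)
  qed
  ultimately show ?thesis
    using even_binomial_cubic_series_sums[of x r] assms(3)
    unfolding point(3,4) u_def w_def by simp
qed

lemma fibr_lucas_pos:
  assumes "0 < n" "even n"
  shows "0 < fibr n" "0 < lucas n"
proof -
  have "0 < sqrt 5 * fibr n" "0 < lucas n"
    using binet_even_index[OF assms] sqrt5_fibr_mult[of n 1] lucas_mult[of n 1] by simp_all
  then show "0 < fibr n" "0 < lucas n"
    by (simp_all add: zero_less_mult_iff)
qed

lemma fib_closed_form_parts:
  fixes n m :: nat
  assumes "0 < n" "even n"
  defines "x \<equiv> sqrt 5 * fibr n / lucas n" and "D \<equiv> sqrt 5 * fibr n / 2"
  defines "u \<equiv> alpha^n * D" and "w \<equiv> - (beta^n * D)"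
  shows "x * (u^(2*m) - w^(2*m)) / real (2*m) / 4
      = 1 / lucas n * (5 ^ (m+1) / real m) * (fibr n ^ (2*m+1) / 2 ^ (2*m+3)) * fibr (2*n*m)"
    and "2 * real n * ln alpha / x / 4 = real n * lucas n / (2 * fibr n * sqrt 5) * ln alpha"
    and "sqrt 5 * s / x / 4 = lucas n / (4 * fibr n) * s"
proof -
  note FL = fibr_lucas_pos[OF assms(1,2)]
  have "x * (u^(2*m) - w^(2*m)) = 5 * fibr n * (5^m * fibr n^(2*m) / 2^(2*m)) * fibr (n*(2*m)) / lucas n"
    using scaled_binet_powers(1)[of n D m] unfolding half_sqrt5_power[symmetric] u_def w_def
    by (simp add: x_def D_def mult_ac)
  then show "x * (u^(2*m) - w^(2*m)) / real (2*m) / 4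
      = 1 / lucas n * (5 ^ (m+1) / real m) * (fibr n ^ (2*m+1) / 2 ^ (2*m+3)) * fibr (2*n*m)"
    by (simp add: power_add field_simps mult_ac)
  show "2 * real n * ln alpha / x / 4 = real n * lucas n / (2 * fibr n * sqrt 5) * ln alpha"
    using FL by (simp add: x_def field_simps)
  show "sqrt 5 * s / x / 4 = lucas n / (4 * fibr n) * s"
    using FL by (simp add: x_def field_simps)
qed

lemma fib_closed_form_even:
  fixes n m :: nat
  assumes "0 < n" "even n" "0 < m"
  defines "x \<equiv> sqrt 5 * fibr n / lucas n" and "D \<equiv> sqrt 5 * fibr n / 2"
  defines "u \<equiv> alpha^n * D" and "w \<equiv> - (beta^n * D)"
  shows "x * ((u^(2*m-1) - w^(2*m-1)) / (real (2*m) - 1) + (u^(2*m) - w^(2*m)) / real (2*m)) / 4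
      - (u^(2*m) + w^(2*m)) / (2 * real (2*m))
      + ((-1)^(2*m) * (2 * real n * ln alpha) + (\<Sum>j=1..2*m. (-1)^(2*m-j) * ((u^j - w^j) / real j))) / x / 4
    = lucas n / (4 * fibr n) * (\<Sum>j=0..m-1. 5 ^ (m-j) / (2 * real m - 2 * real j)
            * fibr n ^ (2*m-2*j) / 2 ^ (2*m-2*j) * fibr (n*(2*m-2*j)))
     - lucas n / (4 * fibr n) * (\<Sum>j=1..m. 5 ^ (m-j) / (2 * real m - 2 * real j + 1)
            * fibr n ^ (2*m-2*j+1) / 2 ^ (2*m-2*j+1) * lucas (n*(2*m-2*j+1)))
     - 5 ^ m / real m * fibr n ^ (2*m) / 2 ^ (2*m+2) * lucas (2*n*m)
     + 1 / lucas n * (5 ^ (m+1) / real m) * (fibr n ^ (2*m+1) / 2 ^ (2*m+3)) * fibr (2*n*m)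
     + 1 / lucas n * (5 ^ m / (2 * real m - 1)) * (fibr n ^ (2*m) / 2 ^ (2*m+1)) * lucas (n*(2*m-1))
     + real n * lucas n / (2 * fibr n * sqrt 5) * ln alpha" (is "?lhs = ?rhs")
proof -
  obtain k where m: "m = Suc k" using assms(3) by (cases m) auto
  have alt: "(\<Sum>j=1..2*m. (-1)^(2*m-j) * ((u^j - w^j) / real j))
      = sqrt 5 * ((\<Sum>j=0..m-1. 5 ^ (m-j) / (2 * real m - 2 * real j)
            * fibr n ^ (2*m-2*j) / 2 ^ (2*m-2*j) * fibr (n*(2*m-2*j)))
        - (\<Sum>j=1..m. 5 ^ (m-j) / (2 * real m - 2 * real j + 1)
            * fibr n ^ (2*m-2*j+1) / 2 ^ (2*m-2*j+1) * lucas (n*(2*m-2*j+1))))"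
    unfolding sum_alternating_even sum_fib_power_term_desc[OF assms(3)] sum_lucas_power_term_desc
      u_def w_def D_def scaled_binet_power_terms
    by (simp add: sum_distrib_left right_diff_distrib)
  have D_even: "D^(2*m) = 5^m * fibr n^(2*m) / 2^(2*m)"
    unfolding D_def by (rule half_sqrt5_power)
  have "u^(2*m-1) - w^(2*m-1) = D^(2*k+1) * lucas (n*(2*m-1))"
    using scaled_binet_powers(3)[of n D k] by (simp add: u_def w_def m)
  moreover have "x * D^(2*k+1) = 2 * D^(2*m) / lucas n"
    by (simp add: x_def D_def m mult_ac)
  ultimately have "x * (u^(2*m-1) - w^(2*m-1)) = 2 * (5^m * fibr n^(2*m) / 2^(2*m)) / lucas n * lucas (n*(2*m-1))"
    unfolding D_even[symmetric] by (metis mult.assoc)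
  then have lucas_part: "x * (u^(2*m-1) - w^(2*m-1)) / (real (2*m) - 1) / 4
      = 1 / lucas n * (5 ^ m / (2 * real m - 1)) * (fibr n ^ (2*m) / 2 ^ (2*m+1)) * lucas (n*(2*m-1))"
  proof -
    have "2 * (a * f / t) / l * c / k / 4 = 1 / l * (a / k) * (f / (t * 2)) * c" for a f t l c k :: real
      by (simp add: field_simps)
    moreover have "real (2*m) - 1 = 2 * real m - 1" "(2::real) ^ (2*m+1) = 2 ^ (2*m) * 2"
      using assms(3) by auto
    ultimately show ?thesis
      unfolding \<open>x * (u^(2*m-1) - w^(2*m-1)) = _\<close> by simp
  qed
  have "u^(2*m) + w^(2*m) = 5^m * fibr n^(2*m) / 2^(2*m) * lucas (n*(2*m))"
    using scaled_binet_powers(2)[of n D m] unfolding D_even u_def w_def .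
  then have lucas_part': "(u^(2*m) + w^(2*m)) / (2 * real (2*m))
      = 5 ^ m / real m * fibr n ^ (2*m) / 2 ^ (2*m+2) * lucas (2*n*m)"
    using assms(3) by (simp add: power_add field_simps mult_ac)
  note shared = fib_closed_form_parts[OF assms(1,2), folded x_def D_def, folded u_def w_def]
  have "x * (a / k1 + b / k) / 4 - c + (l + s) / x / 4 = x * a / k1 / 4 + x * b / k / 4 - c + l / x / 4 + s / x / 4"
    for a b c k k1 l s :: real
    by (simp add: distrib_left add_divide_distrib)
  then have "?lhs = x * (u^(2*m-1) - w^(2*m-1)) / (real (2*m) - 1) / 4 + x * (u^(2*m) - w^(2*m)) / real (2*m) / 4
      - (u^(2*m) + w^(2*m)) / (2 * real (2*m)) + 2 * real n * ln alpha / x / 4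
      + sqrt 5 * ((\<Sum>j=0..m-1. 5 ^ (m-j) / (2 * real m - 2 * real j)
            * fibr n ^ (2*m-2*j) / 2 ^ (2*m-2*j) * fibr (n*(2*m-2*j)))
        - (\<Sum>j=1..m. 5 ^ (m-j) / (2 * real m - 2 * real j + 1)
            * fibr n ^ (2*m-2*j+1) / 2 ^ (2*m-2*j+1) * lucas (n*(2*m-2*j+1)))) / x / 4"
    unfolding alt power_minus1_even mult_1 .
  also have "\<dots> = ?rhs"
    unfolding lucas_part lucas_part' shared
    unfolding right_diff_distrib by linarith
  finally show ?thesis .
qed

lemma fib_closed_form_odd:
  fixes n m :: nat
  assumes "0 < n" "even n" "0 < m"
  defines "x \<equiv> sqrt 5 * fibr n / lucas n" and "D \<equiv> sqrt 5 * fibr n / 2"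
  defines "u \<equiv> alpha^n * D" and "w \<equiv> - (beta^n * D)"
  shows "x * ((u^(2*m+1-1) - w^(2*m+1-1)) / (real (2*m+1) - 1) + (u^(2*m+1) - w^(2*m+1)) / real (2*m+1)) / 4
      - (u^(2*m+1) + w^(2*m+1)) / (2 * real (2*m+1))
      + ((-1)^(2*m+1) * (2 * real n * ln alpha)
         + (\<Sum>j=1..2*m+1. (-1)^(2*m+1-j) * ((u^j - w^j) / real j))) / x / 4
    = lucas n / (4 * fibr n) * (\<Sum>j=0..m. 5 ^ (m-j) / (2 * real m - 2 * real j + 1)
            * fibr n ^ (2*m-2*j+1) / 2 ^ (2*m-2*j+1) * lucas (n*(2*m-2*j+1)))
     - lucas n / (4 * fibr n) * (\<Sum>j=1..m. 5 ^ (m-j+1) / (2 * real m - 2 * real j + 2)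
            * fibr n ^ (2*m-2*j+2) / 2 ^ (2*m-2*j+2) * fibr (n*(2*m-2*j+2)))
     - 5 ^ (m+1) / (2 * real m + 1) * fibr n ^ (2*m+1) / 2 ^ (2*m+2) * fibr (n*(2*m+1))
     + 1 / lucas n * (5 ^ (m+1) / (2 * real m + 1)) * (fibr n ^ (2*m+2) / 2 ^ (2*m+3)) * lucas (n*(2*m+1))
     + 1 / lucas n * (5 ^ (m+1) / real m) * (fibr n ^ (2*m+1) / 2 ^ (2*m+3)) * fibr (2*m*n)
     - real n * lucas n / (2 * fibr n * sqrt 5) * ln alpha" (is "?lhs = ?rhs")
proof -
  note shared = fib_closed_form_parts[OF assms(1,2), folded x_def D_def, folded u_def w_def]
  have alt: "(\<Sum>j=1..2*m+1. (-1)^(2*m+1-j) * ((u^j - w^j) / real j))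
      = sqrt 5 * ((\<Sum>j=0..m. 5 ^ (m-j) / (2 * real m - 2 * real j + 1)
            * fibr n ^ (2*m-2*j+1) / 2 ^ (2*m-2*j+1) * lucas (n*(2*m-2*j+1)))
        - (\<Sum>j=1..m. 5 ^ (m-j+1) / (2 * real m - 2 * real j + 2)
            * fibr n ^ (2*m-2*j+2) / 2 ^ (2*m-2*j+2) * fibr (n*(2*m-2*j+2))))"
    unfolding sum_alternating_odd sum_fib_power_term_desc_shift sum_lucas_power_term_desc_atMost
      u_def w_def D_def scaled_binet_power_terms
    by (simp add: sum_distrib_left right_diff_distrib)
  have D_even: "D^(2*m) = 5^m * fibr n^(2*m) / 2^(2*m)" and D_even': "D^(2*(m+1)) = 5^(m+1) * fibr n^(2*(m+1)) / 2^(2*(m+1))"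
    unfolding D_def by (rule half_sqrt5_power)+
  have "u^(2*m+1) - w^(2*m+1) = D^(2*m+1) * lucas (n*(2*m+1))"
    using scaled_binet_powers(3)[of n D m] by (simp add: u_def w_def)
  moreover have "x * D^(2*m+1) = 2 * D^(2*(m+1)) / lucas n"
    by (simp add: x_def D_def mult_ac)
  ultimately have "x * (u^(2*m+1) - w^(2*m+1))
      = 2 * (5^(m+1) * fibr n^(2*(m+1)) / 2^(2*(m+1))) / lucas n * lucas (n*(2*m+1))"
    unfolding D_even'[symmetric] by (metis mult.assoc)
  then have lucas_part: "x * (u^(2*m+1) - w^(2*m+1)) / real (2*m+1) / 4
      = 1 / lucas n * (5 ^ (m+1) / (2 * real m + 1)) * (fibr n ^ (2*m+2) / 2 ^ (2*m+3)) * lucas (n*(2*m+1))"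
    by (simp add: power_add field_simps mult_ac)
  have "u^(2*m+1) + w^(2*m+1) = 5 * fibr n * (5^m * fibr n^(2*m) / 2^(2*m)) * fibr (n*(2*m+1)) / 2"
    using scaled_binet_powers(4)[of n D m] unfolding u_def w_def power_add D_even
    by (simp add: D_def mult_ac)
  moreover have "(5 * f * (a * g / t) * c / 2) / (2 * k) = a * 5 / k * (g * f) / (t * 4) * c"
    for a c f g k t :: real
    by (simp add: field_simps)
  moreover have "real (2*m+1) = 2 * real m + 1" "(5::real) ^ (m+1) = 5^m * 5"
    "fibr n ^ (2*m+1) = fibr n ^ (2*m) * fibr n" "(2::real) ^ (2*m+2) = 2^(2*m) * 4"
    by simp_all
  ultimately have fib_part': "(u^(2*m+1) + w^(2*m+1)) / (2 * real (2*m+1))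
      = 5 ^ (m+1) / (2 * real m + 1) * fibr n ^ (2*m+1) / 2 ^ (2*m+2) * fibr (n*(2*m+1))"
    by (simp only:)
  have "2*m+1-1 = 2*m" "real (2*m+1) - 1 = real (2*m)" "fibr (2*m*n) = fibr (2*n*m)"
    by (simp_all add: mult_ac)
  moreover have "x * (a / k1 + b / k) / 4 - c + (- l + s) / x / 4
      = x * a / k1 / 4 + x * b / k / 4 - c - l / x / 4 + s / x / 4" for a b c k k1 l s :: real
    by (simp add: distrib_left add_divide_distrib diff_divide_distrib)
  ultimately have "?lhs = x * (u^(2*m) - w^(2*m)) / real (2*m) / 4 + x * (u^(2*m+1) - w^(2*m+1)) / real (2*m+1) / 4
      - (u^(2*m+1) + w^(2*m+1)) / (2 * real (2*m+1)) - 2 * real n * ln alpha / x / 4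
      + sqrt 5 * ((\<Sum>j=0..m. 5 ^ (m-j) / (2 * real m - 2 * real j + 1)
            * fibr n ^ (2*m-2*j+1) / 2 ^ (2*m-2*j+1) * lucas (n*(2*m-2*j+1)))
        - (\<Sum>j=1..m. 5 ^ (m-j+1) / (2 * real m - 2 * real j + 2)
            * fibr n ^ (2*m-2*j+2) / 2 ^ (2*m-2*j+2) * fibr (n*(2*m-2*j+2)))) / x / 4"
    unfolding alt by simp
  also have "\<dots> = ?rhs"
    unfolding lucas_part fib_part' shared \<open>fibr (2*m*n) = fibr (2*n*m)\<close>
    unfolding right_diff_distrib by linarith
  finally show ?thesis .
qed

theorem theorem18:
  fixes n m :: nat
  assumes "n > 0" and "even n" and "m > 0"
  shows
   "(\<lambda>i. let k = Suc i in
        fibr n ^ (2*k) * 5 ^ k * real ((2*k) choose (2*m))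
        / (lucas n ^ (2*k) * (2 * real k - 1) * (2 * real k) * (2 * real k + 1)))
    sums
     ( lucas n / (4 * fibr n) * (\<Sum>j=0..m-1. 5 ^ (m-j) / (2 * real m - 2 * real j)
            * fibr n ^ (2*m-2*j) / 2 ^ (2*m-2*j) * fibr (n*(2*m-2*j)))
     - lucas n / (4 * fibr n) * (\<Sum>j=1..m. 5 ^ (m-j) / (2 * real m - 2 * real j + 1)
            * fibr n ^ (2*m-2*j+1) / 2 ^ (2*m-2*j+1) * lucas (n*(2*m-2*j+1)))
     - 5 ^ m / real m * fibr n ^ (2*m) / 2 ^ (2*m+2) * lucas (2*n*m)
     + 1 / lucas n * (5 ^ (m+1) / real m) * (fibr n ^ (2*m+1) / 2 ^ (2*m+3)) * fibr (2*n*m)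
     + 1 / lucas n * (5 ^ m / (2 * real m - 1)) * (fibr n ^ (2*m) / 2 ^ (2*m+1)) * lucas (n*(2*m-1))
     + real n * lucas n / (2 * fibr n * sqrt 5) * ln alpha)
  \<and>
   (\<lambda>i. let k = Suc i in
        fibr n ^ (2*k) * 5 ^ k * real ((2*k) choose (2*m+1))
        / (lucas n ^ (2*k) * (2 * real k - 1) * (2 * real k) * (2 * real k + 1)))
    sums
     ( lucas n / (4 * fibr n) * (\<Sum>j=0..m. 5 ^ (m-j) / (2 * real m - 2 * real j + 1)
            * fibr n ^ (2*m-2*j+1) / 2 ^ (2*m-2*j+1) * lucas (n*(2*m-2*j+1)))
     - lucas n / (4 * fibr n) * (\<Sum>j=1..m. 5 ^ (m-j+1) / (2 * real m - 2 * real j + 2)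
            * fibr n ^ (2*m-2*j+2) / 2 ^ (2*m-2*j+2) * fibr (n*(2*m-2*j+2)))
     - 5 ^ (m+1) / (2 * real m + 1) * fibr n ^ (2*m+1) / 2 ^ (2*m+2) * fibr (n*(2*m+1))
     + 1 / lucas n * (5 ^ (m+1) / (2 * real m + 1)) * (fibr n ^ (2*m+2) / 2 ^ (2*m+3)) * lucas (n*(2*m+1))
     + 1 / lucas n * (5 ^ (m+1) / real m) * (fibr n ^ (2*m+1) / 2 ^ (2*m+3)) * fibr (2*m*n)
     - real n * lucas n / (2 * fibr n * sqrt 5) * ln alpha)"
proof -
  have "2 \<le> 2*m" "2 \<le> 2*m+1" using assms(3) by simp_all
  from fib_lucas_series_sums[OF assms(1,2) this(1)] fib_lucas_series_sums[OF assms(1,2) this(2)]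
  show ?thesis
    unfolding fib_closed_form_even[OF assms] fib_closed_form_odd[OF assms] ..
qed

end
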